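(* Let $f:\mathbb{R}^n\to\overline{\mathbb{R}}$ be a proper closed convex function with conjugate $f^*$, and let $K=\{(x,r)\in\mathbb{R}^n\times\mathbb{R} : x=0,\ r\ge 0\}$. The mapping $\Psi:2^{\mathbb{R}^{n+1}}\to 2^{\mathbb{R}^{n+1}}$ defined by $$\Psi(F^* ):=\bigcap_{(u,f^*(u))\in F^*}\{(x,f(x))\in\mathbb{R}^n\times\mathbb{R} : u\in\partial f(x)\}$$ is an inclusion reversing one-to-one mapping between the set of $K$-minimal exposed faces of $\operatorname{epi} f^*$ and the set of $K$-minimal exposed faces of $\operatorname{epi} f$. Its inverse mapping is given by $$\Psi^*(F):=\bigcap_{(x,f(x))\in F}\{(u,f^*(u))\in\mathbb{R}^n\times\mathbb{R} : u\in\partial f(x)\}.$$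
   Context: $\overline{\mathbb{R}}=\mathbb{R}\cup\{\pm\infty\}$; $f^*(u)=\sup_x(\langle x,u\rangle-f(x))$. An exposed face of a convex set $A$ is a set $A\cap H$ with $H$ a supporting hyperplane to $A$ (i.e. $A\cap H\neq\emptyset$ and $A$ lies in one closed half-space bounded by $H$). A point $p\in A$ is minimal with respect to $K$ if $(\{p\}-K\setminus(-K))\cap A=\emptyset$; a face is $K$-minimal if all its points are minimal with respect to $K$. *)

theory Defs
  imports "HOL-Analysis.Analysis" "HOL-Library.Extended_Real"
begin

text \<open>Functions R^n -> extended reals; R^n is an arbitrary Euclidean space 'a,
  and R^(n+1) = R^n x R is the product type 'a \<times> real.\<close>

definition epi :: "('a \<Rightarrow> ereal) \<Rightarrow> ('a \<times> real) set" where
  "epi f = {(x, r). f x \<le> ereal r}"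

definition proper_fun :: "('a \<Rightarrow> ereal) \<Rightarrow> bool" where
  "proper_fun f \<longleftrightarrow> (\<forall>x. f x \<noteq> -\<infinity>) \<and> (\<exists>x. f x < \<infinity>)"

definition closed_fun :: "('a::topological_space \<Rightarrow> ereal) \<Rightarrow> bool" where
  "closed_fun f \<longleftrightarrow> closed (epi f)"

definition convex_fun :: "('a::real_vector \<Rightarrow> ereal) \<Rightarrow> bool" where
  "convex_fun f \<longleftrightarrow> convex (epi f)"

definition fconj :: "('a::real_inner \<Rightarrow> ereal) \<Rightarrow> 'a \<Rightarrow> ereal" where
  "fconj f u = (SUP x. ereal (inner x u) - f x)"

definition subdiff :: "('a::real_inner \<Rightarrow> ereal) \<Rightarrow> 'a \<Rightarrow> 'a set" where
  "subdiff f x = {u. \<bar>f x\<bar> \<noteq> \<infinity> \<and> (\<forall>y. f x + ereal (inner (y - x) u) \<le> f y)}"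

definition exposed_face :: "'b::real_inner set \<Rightarrow> 'b set \<Rightarrow> bool" where
  "exposed_face A F \<longleftrightarrow> (\<exists>a b. a \<noteq> 0 \<and> F = A \<inter> {p. inner p a = b} \<and>
      A \<inter> {p. inner p a = b} \<noteq> {} \<and> A \<subseteq> {p. inner p a \<le> b})"

definition minimal_wrt :: "'b::ab_group_add set \<Rightarrow> 'b set \<Rightarrow> 'b \<Rightarrow> bool" where
  "minimal_wrt K A p \<longleftrightarrow> p \<in> A \<and> ({p - k | k. k \<in> K - uminus ` K} \<inter> A = {})"

definition minimal_face :: "'b::ab_group_add set \<Rightarrow> 'b set \<Rightarrow> 'b set \<Rightarrow> bool" where
  "minimal_face K A F \<longleftrightarrow> (\<forall>p\<in>F. minimal_wrt K A p)"

definition Kvert :: "('a::zero \<times> real) set" where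
  "Kvert = {(x, r). x = 0 \<and> r \<ge> 0}"

definition Psi :: "('a::real_inner \<Rightarrow> ereal) \<Rightarrow> ('a \<times> real) set \<Rightarrow> ('a \<times> real) set" where
  "Psi f Fs = (\<Inter>u \<in> {u. \<exists>r. (u, r) \<in> Fs \<and> fconj f u = ereal r}.
      {(x, r). f x = ereal r \<and> u \<in> subdiff f x})"

definition Psi_star :: "('a::real_inner \<Rightarrow> ereal) \<Rightarrow> ('a \<times> real) set \<Rightarrow> ('a \<times> real) set" where
  "Psi_star f F = (\<Inter>x \<in> {x. \<exists>r. (x, r) \<in> F \<and> f x = ereal r}.
      {(u, r). fconj f u = ereal r \<and> u \<in> subdiff f x})"

end

theory Submission
  imports Defs
begin

(* For a closed convex f, Fenchel inversion gives u \<in> \<partial>f(x) iff x \<in> \<partial>f*(u): one direction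
   is the Fenchel-Young equality, the other separates a point below the epigraph by a
   non-vertical hyperplane. A K-minimal exposed face of an epigraph cannot have a vertical
   normal, so it is the contact set of an affine minorant, i.e. a nonempty set
   {(x, g x) : u \<in> \<partial>g(x)}. Thus \<Psi> sends the face of epi f* of slope x0 to the intersection of
   the faces of epi f of slopes u \<in> \<partial>f(x0). For u0 in the relative interior of the convex set
   \<partial>f(x0), any x with u0 \<in> \<partial>f(x) satisfies \<partial>f(x0) \<subseteq> \<partial>f(x), because the linear functional
   u \<mapsto> <x - x0, u> attains its maximum over \<partial>f(x0) at u0; so the intersection is the single face
   of slope u0, and \<Psi>* maps it back to the face of slope x0. *)

lemma mem_subdiff_iff_minorant:
  "u \<in> subdiff g x \<longleftrightarrow>
     (\<exists>a. g x = ereal a \<and> (\<forall>y. ereal (inner y u - (inner x u - a)) \<le> g y))"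
  unfolding subdiff_def by (cases "g x") (auto simp: inner_diff_left algebra_simps)

lemma subdiff_finite: "u \<in> subdiff g x \<Longrightarrow> \<exists>a. g x = ereal a"
  by (auto simp: mem_subdiff_iff_minorant)

lemma convex_subdiff: "convex (subdiff g x)"
proof (cases "g x")
  case (real a)
  have "subdiff g x = (\<Inter>y. {u. ereal (inner y u - (inner x u - a)) \<le> g y})"
    using real by (auto simp: mem_subdiff_iff_minorant)
  moreover have "convex {u. ereal (inner y u - (inner x u - a)) \<le> g y}" for y
  proof (cases "g y")
    case (real r)
    then have "{u. ereal (inner y u - (inner x u - a)) \<le> g y} = {u. inner (y - x) u \<le> r - a}"
      by (auto simp: inner_diff_left)
    then show ?thesis by (simp add: convex_halfspace_le)
  qed auto
  ultimately show ?thesis by (simp add: convex_INT)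
qed (auto simp: subdiff_def)

lemma inner_eq_of_max_at_rel_interior:
  fixes S :: "'a::real_inner set"
  assumes "convex S" and "u \<in> rel_interior S" and "\<And>w. w \<in> S \<Longrightarrow> inner a w \<le> inner a u"
    and "w \<in> S"
  shows "inner a w = inner a u"
proof -
  have face: "S \<inter> {w. inner a w = inner a u} face_of S"
    using assms(1,3) by (rule face_of_Int_supporting_hyperplane_le)
  have "u \<in> S" using assms(2) rel_interior_subset by blast
  then have "S \<subseteq> S \<inter> {w. inner a w = inner a u}"
    using subset_of_face_of[OF face subset_refl] assms(2) by blast
  then show ?thesis using assms(4) by blast
qed

lemma subdiff_subset_of_rel_interior:
  assumes u0: "u \<in> rel_interior (subdiff g x0)" and u: "u \<in> subdiff g x"
  shows "subdiff g x0 \<subseteq> subdiff g x"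
proof
  have "u \<in> subdiff g x0" using u0 rel_interior_subset by blast
  then obtain a0 where a0: "g x0 = ereal a0" using subdiff_finite by blast
  obtain a where a: "g x = ereal a" and m: "\<And>y. ereal (inner y u - (inner x u - a)) \<le> g y"
    using u by (auto simp: mem_subdiff_iff_minorant)
  have bound: "inner (x - x0) w \<le> a - a0" if "w \<in> subdiff g x0" for w
    using that a0 a by (auto simp: mem_subdiff_iff_minorant inner_diff_left dest: spec[of _ x])
  have "a - a0 \<le> inner (x - x0) u"
    using m[of x0] a0 by (simp add: inner_diff_left)
  then have at_u: "inner (x - x0) u = a - a0"
    using bound[OF \<open>u \<in> subdiff g x0\<close>] by linarith
  fix w assume w: "w \<in> subdiff g x0"
  have "inner (x - x0) w = a - a0"
    using inner_eq_of_max_at_rel_interior[OF convex_subdiff u0 _ w, of "x - x0"] bound at_u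
    by auto
  then have "inner x w - a = inner x0 w - a0"
    by (simp add: inner_diff_left)
  then show "w \<in> subdiff g x"
    using w a0 a by (auto simp: mem_subdiff_iff_minorant)
qed

lemma fconj_upper: "ereal (inner y u) - f y \<le> fconj f u"
  unfolding fconj_def by (rule SUP_upper) simp

lemma fconj_le_iff_minorant: "fconj f u \<le> ereal c \<longleftrightarrow> (\<forall>y. ereal (inner y u - c) \<le> f y)"
proof -
  have "ereal (inner y u) - f y \<le> ereal c \<longleftrightarrow> ereal (inner y u - c) \<le> f y" for y
    by (cases "f y") auto
  then show ?thesis unfolding fconj_def SUP_le_iff by simp
qed

lemma fconj_eq_of_subdiff:
  assumes "u \<in> subdiff f x" and "f x = ereal a"
  shows "fconj f u = ereal (inner x u - a)"
proof (rule antisym)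
  show "fconj f u \<le> ereal (inner x u - a)"
    using assms by (auto simp: fconj_le_iff_minorant mem_subdiff_iff_minorant)
  show "ereal (inner x u - a) \<le> fconj f u"
    using fconj_upper[of x u f] assms(2) by simp
qed

lemma subdiff_fconj_of_subdiff:
  assumes "u \<in> subdiff f x"
  shows "x \<in> subdiff (fconj f) u"
proof -
  obtain a where a: "f x = ereal a" using assms subdiff_finite by blast
  have "ereal (inner v x - a) \<le> fconj f v" for v
    using fconj_upper[of x v f] a by (simp add: inner_commute)
  then show ?thesis
    using fconj_eq_of_subdiff[OF assms a] by (auto simp: mem_subdiff_iff_minorant inner_commute)
qed

lemma affine_minorant_above_point:
  fixes f :: "'a::euclidean_space \<Rightarrow> ereal"
  assumes "closed (epi f)" and "convex (epi f)"
    and minorant: "\<And>y. ereal (inner y u - c) \<le> f y"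
    and "(x, \<beta>) \<notin> epi f" and below: "\<beta> \<le> inner x u - c"
  shows "\<exists>w c'. (\<forall>y. ereal (inner y w - c') \<le> f y) \<and> \<beta> < inner x w - c'"
proof -
  obtain a b where sep_x: "inner a (x, \<beta>) < b" and sep_epi: "\<And>p. p \<in> epi f \<Longrightarrow> b < inner a p"
    using separating_hyperplane_closed_point[OF assms(2,1,4)] by blast
  obtain v t where a: "a = (v, t)" by (cases a)
  \<comment> \<open>Adding a small multiple of the separating functional to the minorant keeps the
    resulting hyperplane non-vertical, whatever the sign of t.\<close>
  define l where "l = 1 / (1 + \<bar>t\<bar>)"
  define d where "d = 1 + l * t"
  have l: "l > 0" by (simp add: l_def add_pos_nonneg)
  have d: "d > 0"
  proof -
    have "\<bar>l * t\<bar> < 1" using l by (simp add: abs_mult l_def field_simps)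
    then show ?thesis unfolding d_def by (simp add: abs_less_iff)
  qed
  define w where "w = (1 / d) *\<^sub>R (u - l *\<^sub>R v)"
  define c' where "c' = (c - l * b) / d"
  have key: "d * (inner y w - s - c') = (inner y u - s - c) - l * (inner v y + t * s - b)" for y s
  proof -
    have "d * inner y w = inner y u - l * inner v y" and "d * c' = c - l * b"
      using d by (simp_all add: w_def c'_def inner_diff_right inner_commute)
    then show ?thesis by (simp add: right_diff_distrib d_def algebra_simps)
  qed
  have "ereal (inner y w - c') \<le> f y" for y
  proof (cases "f y")
    case (real r)
    then have "b < inner v y + t * r" using sep_epi[of "(y, r)"] a by (simp add: epi_def)
    moreover have "inner y u - c \<le> r" using minorant[of y] real by simp
    ultimately have "d * (inner y w - r - c') < 0"
      unfolding key using mult_pos_pos[OF l, of "inner v y + t * r - b"] by linarith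
    then show ?thesis using d real by (simp add: mult_less_0_iff)
  next
    case MInf
    then show ?thesis using minorant[of y] by simp
  qed simp
  moreover have "0 < d * (inner x w - \<beta> - c')"
    unfolding key using sep_x a below mult_pos_neg[OF l, of "inner v x + t * \<beta> - b"] by simp
  then have "\<beta> < inner x w - c'" using d by (simp add: zero_less_mult_iff)
  ultimately show ?thesis by blast
qed

lemma subdiff_of_subdiff_fconj:
  fixes f :: "'a::euclidean_space \<Rightarrow> ereal"
  assumes "closed (epi f)" and "convex (epi f)" and "x \<in> subdiff (fconj f) u"
  shows "u \<in> subdiff f x"
proof -
  obtain c where c: "fconj f u = ereal c"
    and slope_x: "\<And>v. ereal (inner v x - (inner u x - c)) \<le> fconj f v"
    using assms(3) by (auto simp: mem_subdiff_iff_minorant)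
  have minorant: "\<And>y. ereal (inner y u - c) \<le> f y"
    using c fconj_le_iff_minorant by (metis order_refl)
  define \<beta> where "\<beta> = inner x u - c"
  have "(x, \<beta>) \<in> epi f"
  proof (rule ccontr)
    assume "(x, \<beta>) \<notin> epi f"
    then obtain w c' where "\<forall>y. ereal (inner y w - c') \<le> f y" and above: "\<beta> < inner x w - c'"
      using affine_minorant_above_point[OF assms(1,2) minorant \<open>(x, \<beta>) \<notin> epi f\<close>]
      by (auto simp: \<beta>_def)
    then have "fconj f w \<le> ereal c'" by (simp add: fconj_le_iff_minorant)
    from order_trans[OF slope_x[of w] this] have "inner w x - (inner u x - c) \<le> c'" by simp
    with above show False by (simp add: \<beta>_def inner_commute)
  qed
  then have "f x = ereal \<beta>"
    using minorant[of x] by (simp add: epi_def \<beta>_def)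
  then show ?thesis
    using minorant by (auto simp: mem_subdiff_iff_minorant \<beta>_def)
qed

lemma subdiff_fconj_iff:
  fixes f :: "'a::euclidean_space \<Rightarrow> ereal"
  assumes "closed (epi f)" and "convex (epi f)"
  shows "x \<in> subdiff (fconj f) u \<longleftrightarrow> u \<in> subdiff f x"
  using subdiff_of_subdiff_fconj[OF assms] subdiff_fconj_of_subdiff by blast

definition slope_face :: "('a::real_inner \<Rightarrow> ereal) \<Rightarrow> 'a \<Rightarrow> ('a \<times> real) set" where
  "slope_face g u = {(x, r). g x = ereal r \<and> u \<in> subdiff g x}"

lemma epi_subset_halfspace_iff:
  "epi g \<subseteq> {(y, s). inner y u - s \<le> c} \<longleftrightarrow> (\<forall>y. ereal (inner y u - c) \<le> g y)"
proof
  assume epi: "epi g \<subseteq> {(y, s). inner y u - s \<le> c}"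
  show "\<forall>y. ereal (inner y u - c) \<le> g y"
  proof
    fix y
    show "ereal (inner y u - c) \<le> g y"
    proof (cases "g y")
      case (real r)
      then have "(y, r) \<in> epi g" by (simp add: epi_def)
      then show ?thesis using epi real by auto
    next
      case MInf
      then have "(y, inner y u - c - 1) \<in> epi g" by (simp add: epi_def)
      then show ?thesis using epi by auto
    qed simp
  qed
next
  assume minorant: "\<forall>y. ereal (inner y u - c) \<le> g y"
  show "epi g \<subseteq> {(y, s). inner y u - s \<le> c}"
  proof (clarsimp simp: epi_def)
    fix y s assume "g y \<le> ereal s"
    then have "ereal (inner y u - c) \<le> ereal s" using minorant order_trans by blast
    then show "inner y u - s \<le> c" by simp
  qed
qed

lemma slope_face_eq_contact_set:
  assumes minorant: "\<And>y. ereal (inner y u - c) \<le> g y"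
    and "(x0, s0) \<in> epi g" and "inner x0 u - s0 = c"
  shows "slope_face g u = epi g \<inter> {(y, s). inner y u - s = c}"
proof (intro set_eqI iffI)
  fix p assume "p \<in> slope_face g u"
  then obtain y s where p: "p = (y, s)" and gy: "g y = ereal s"
    and slope_y: "\<And>z. ereal (inner z u - (inner y u - s)) \<le> g z"
    by (auto simp: slope_face_def mem_subdiff_iff_minorant)
  have "g x0 \<le> ereal s0" using assms(2) by (simp add: epi_def)
  then have "ereal (inner x0 u - (inner y u - s)) \<le> ereal s0"
    using slope_y[of x0] by (rule order_trans[rotated])
  moreover have "inner y u - c \<le> s" using minorant[of y] gy by simp
  ultimately show "p \<in> epi g \<inter> {(y, s). inner y u - s = c}"
    using p gy assms(3) by (simp add: epi_def)
next
  fix p assume "p \<in> epi g \<inter> {(y, s). inner y u - s = c}"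
  then obtain y s where p: "p = (y, s)" and "g y \<le> ereal s" and c: "c = inner y u - s"
    by (auto simp: epi_def)
  moreover have "ereal s \<le> g y" using minorant[of y] c by simp
  ultimately have "g y = ereal s" by simp
  then show "p \<in> slope_face g u"
    using p minorant c by (auto simp: slope_face_def mem_subdiff_iff_minorant)
qed

lemma Kvert_diff_uminus:
  "(Kvert :: ('a::ab_group_add \<times> real) set) - uminus ` Kvert = {(0, \<rho>) | \<rho>. \<rho> > 0}"
  by (auto simp: Kvert_def image_iff) (metis neg_0_equal_iff_equal order_le_less)

lemma minimal_face_Kvert_iff:
  "minimal_face Kvert A F \<longleftrightarrow> (\<forall>(x, s) \<in> F. (x, s) \<in> A \<and> (\<forall>\<rho>>0. (x, s - \<rho>) \<notin> A))"
  unfolding minimal_face_def minimal_wrt_def Kvert_diff_uminus by fastforce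

lemma exposed_minimal_face_slope_face:
  assumes "slope_face g u \<noteq> {}"
  shows "exposed_face (epi g) (slope_face g u) \<and> minimal_face Kvert (epi g) (slope_face g u)"
proof
  obtain x0 s0 where "(x0, s0) \<in> slope_face g u" using assms by auto
  then have gx0: "g x0 = ereal s0"
    and minorant: "\<And>y. ereal (inner y u - (inner x0 u - s0)) \<le> g y"
    by (auto simp: slope_face_def mem_subdiff_iff_minorant)
  define c where "c = inner x0 u - s0"
  have "slope_face g u = epi g \<inter> {(y, s). inner y u - s = c}"
    using minorant gx0 by (intro slope_face_eq_contact_set) (auto simp: epi_def c_def)
  moreover have "{(y, s). inner y u - s = c} = {p. inner p (u, -1::real) = c}" by auto
  ultimately have face: "slope_face g u = epi g \<inter> {p. inner p (u, -1::real) = c}" by simp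
  have "epi g \<subseteq> {(y, s). inner y u - s \<le> c}"
    using minorant by (simp add: epi_subset_halfspace_iff c_def)
  moreover have "{(y, s). inner y u - s \<le> c} = {p. inner p (u, -1::real) \<le> c}" by auto
  ultimately have "epi g \<subseteq> {p. inner p (u, -1::real) \<le> c}" by simp
  with face assms show "exposed_face (epi g) (slope_face g u)"
    unfolding exposed_face_def by (intro exI[of _ "(u, -1::real)"] exI[of _ c]) (simp add: zero_prod_def)
  show "minimal_face Kvert (epi g) (slope_face g u)"
    by (auto simp: minimal_face_Kvert_iff slope_face_def epi_def)
qed

lemma slope_face_of_exposed_minimal_face:
  assumes "exposed_face (epi g) F" and "minimal_face Kvert (epi g) F"
  shows "\<exists>u. F = slope_face g u \<and> F \<noteq> {}"
proof -
  obtain a b where F: "F = epi g \<inter> {p. inner p a = b}" and "F \<noteq> {}"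
    and halfspace: "epi g \<subseteq> {p. inner p a \<le> b}"
    using assms(1) unfolding exposed_face_def by blast
  obtain v t where a: "a = (v, t)" by (cases a)
  obtain x0 s0 where x0: "(x0, s0) \<in> F" using \<open>F \<noteq> {}\<close> by auto
  then have x0_epi: "(x0, s0) \<in> epi g" and on_F: "inner x0 v + s0 * t = b"
    by (simp_all add: F a)
  have up: "(x0, s0 + 1) \<in> epi g"
    using x0_epi order_trans[of "g x0" "ereal s0" "ereal (s0 + 1)"] by (simp add: epi_def)
  \<comment> \<open>K-minimality rules out a vertical exposing hyperplane.\<close>
  have "t < 0"
  proof -
    have "inner (x0, s0 + 1) a \<le> b" using halfspace up by blast
    then have "t \<le> 0" using on_F by (simp add: a algebra_simps)
    moreover have "t \<noteq> 0"
    proof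
      assume "t = 0"
      then have "(x0, s0 + 1) \<in> F" using up on_F by (simp add: F a)
      then have "\<forall>\<rho>>0. (x0, s0 + 1 - \<rho>) \<notin> epi g"
        using assms(2) unfolding minimal_face_Kvert_iff by blast
      then show False using x0_epi by (metis add_diff_cancel_right' zero_less_one)
    qed
    ultimately show ?thesis by simp
  qed
  define u where "u = (- 1 / t) *\<^sub>R v"
  define c where "c = - b / t"
  have inner_a: "inner (y, s) a = (- t) * (inner y u - s)" for y s
    using \<open>t < 0\<close> by (simp add: a u_def algebra_simps)
  have b: "b = (- t) * c" using \<open>t < 0\<close> by (simp add: c_def)
  have "{p. inner p a = b} = {(y, s). inner y u - s = c}"
    and "{p. inner p a \<le> b} = {(y, s). inner y u - s \<le> c}"
    using \<open>t < 0\<close> by (auto simp: inner_a b)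
  then have F': "F = epi g \<inter> {(y, s). inner y u - s = c}"
    and "epi g \<subseteq> {(y, s). inner y u - s \<le> c}"
    using F halfspace by simp_all
  then have "slope_face g u = epi g \<inter> {(y, s). inner y u - s = c}"
    using x0_epi x0 by (intro slope_face_eq_contact_set) (simp_all add: epi_subset_halfspace_iff)
  with F' \<open>F \<noteq> {}\<close> show ?thesis by blast
qed

lemma exposed_minimal_face_iff:
  "exposed_face (epi g) F \<and> minimal_face Kvert (epi g) F \<longleftrightarrow> (\<exists>u. F = slope_face g u \<and> F \<noteq> {})"
  using exposed_minimal_face_slope_face slope_face_of_exposed_minimal_face by blast

definition dual_face :: "('a::real_inner \<Rightarrow> ereal) \<Rightarrow> ('a \<Rightarrow> ereal) \<Rightarrow> ('a \<times> real) set \<Rightarrow> ('a \<times> real) set"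
  where "dual_face g h F = (\<Inter>u \<in> {u. \<exists>r. (u, r) \<in> F \<and> h u = ereal r}. slope_face g u)"

lemma dual_face_slope_face:
  fixes g h :: "'a::euclidean_space \<Rightarrow> ereal"
  assumes dual: "\<And>x u. u \<in> subdiff g x \<longleftrightarrow> x \<in> subdiff h u"
    and "slope_face h x0 \<noteq> {}"
  shows "\<exists>u0. slope_face g u0 \<noteq> {} \<and> dual_face g h (slope_face h x0) = slope_face g u0
      \<and> dual_face h g (slope_face g u0) = slope_face h x0"
proof -
  have "subdiff g x0 \<noteq> {}" using assms by (auto simp: slope_face_def)
  then obtain u0 where u0: "u0 \<in> rel_interior (subdiff g x0)"
    using rel_interior_eq_empty[OF convex_subdiff] by blast
  then have "u0 \<in> subdiff g x0" using rel_interior_subset by blast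
  have grow: "subdiff g x0 \<subseteq> subdiff g x" if "u0 \<in> subdiff g x" for x
    using subdiff_subset_of_rel_interior[OF u0 that] .
  have h_index: "{u. \<exists>r. (u, r) \<in> slope_face h x0 \<and> h u = ereal r} = subdiff g x0"
    using subdiff_finite by (fastforce simp: slope_face_def dual)
  have g_index: "{x. \<exists>r. (x, r) \<in> slope_face g u0 \<and> g x = ereal r} = subdiff h u0"
    using subdiff_finite by (fastforce simp: slope_face_def dual[symmetric])
  show ?thesis
  proof (intro exI conjI)
    show "slope_face g u0 \<noteq> {}"
      using \<open>u0 \<in> subdiff g x0\<close> subdiff_finite by (fastforce simp: slope_face_def)
    show "dual_face g h (slope_face h x0) = slope_face g u0"
      unfolding dual_face_def h_index using \<open>u0 \<in> subdiff g x0\<close> grow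
      by (auto simp: slope_face_def)
    show "dual_face h g (slope_face g u0) = slope_face h x0"
      unfolding dual_face_def g_index using \<open>u0 \<in> subdiff g x0\<close>
      by (auto simp: slope_face_def dual[symmetric]) (meson grow subsetD)
  qed
qed

theorem theorem3p3:
  fixes f :: "'a::euclidean_space \<Rightarrow> ereal"
  assumes "proper_fun f" and "closed_fun f" and "convex_fun f"
  defines "FS \<equiv> {F. exposed_face (epi (fconj f)) F \<and> minimal_face Kvert (epi (fconj f)) F}"
      and "FF \<equiv> {F. exposed_face (epi f) F \<and> minimal_face Kvert (epi f) F}"
  shows "bij_betw (Psi f) FS FF
       \<and> (\<forall>F1\<in>FS. \<forall>F2\<in>FS. F1 \<subseteq> F2 \<longrightarrow> Psi f F2 \<subseteq> Psi f F1)
       \<and> (\<forall>F\<in>FS. Psi_star f (Psi f F) = F)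
       \<and> (\<forall>G\<in>FF. Psi_star f G \<in> FS \<and> Psi f (Psi_star f G) = G)"
proof -
  have dual: "u \<in> subdiff f x \<longleftrightarrow> x \<in> subdiff (fconj f) u" for x u
    using subdiff_fconj_iff assms(2,3) unfolding closed_fun_def convex_fun_def by blast
  have Psi: "Psi f = dual_face f (fconj f)"
    unfolding Psi_def dual_face_def slope_face_def ..
  have Psi_star: "Psi_star f = dual_face (fconj f) f"
    unfolding Psi_star_def dual_face_def slope_face_def dual ..
  have FS: "FS = {F. \<exists>x. F = slope_face (fconj f) x \<and> F \<noteq> {}}"
    unfolding FS_def exposed_minimal_face_iff ..
  have FF: "FF = {G. \<exists>u. G = slope_face f u \<and> G \<noteq> {}}"
    unfolding FF_def exposed_minimal_face_iff ..
  have Psi_FS: "Psi f F \<in> FF \<and> Psi_star f (Psi f F) = F" if "F \<in> FS" for F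
    using that dual_face_slope_face[of f "fconj f", OF dual] unfolding FS FF Psi Psi_star by fastforce
  have Psi_star_FF: "Psi_star f G \<in> FS \<and> Psi f (Psi_star f G) = G" if "G \<in> FF" for G
    using that dual_face_slope_face[of "fconj f" f, OF dual[symmetric]] unfolding FS FF Psi Psi_star
    by fastforce
  have "bij_betw (Psi f) FS FF"
    by (rule bij_betw_byWitness[where f' = "Psi_star f"]) (use Psi_FS Psi_star_FF in blast)+
  moreover have "\<forall>F1\<in>FS. \<forall>F2\<in>FS. F1 \<subseteq> F2 \<longrightarrow> Psi f F2 \<subseteq> Psi f F1"
    unfolding Psi_def by blast
  ultimately show ?thesis using Psi_FS Psi_star_FF by simp
qed

end
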